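(* For each $1\le i\le4$, the natural action of $PGL(W)\times PGL(R)$ on $\mathbf F_i$ is free on a nonempty open subset of $\mathbf F_i$.
   Context: Over $\mathbb C$, $V=H^0\mathcal O_{\mathbb P^3}(1)$, $\check V$ its dual, $R$ and $W$ vector spaces of dimensions $3$ and $4$, $\mathbf T=\mathbb P(\mathrm{Hom}(R\otimes V,W))$. $\mathbf F\subset\mathbf T\times\mathbb P(\mathrm{Hom}(W,\check V))\times\mathbb P(\mathrm{Hom}(\check V,W))$ is the subvariety of triples $(\varphi,\psi,\psi')$ such that the composite $R\otimes V\otimes V\to W\otimes V\to\check V\otimes V\to\mathbb C$ induced by $\varphi,\psi$ factors through $R\otimes S^2V$, the composite $R\otimes\check W\otimes\check W\to\check V\otimes\check W\to W\otimes\check W\to\mathbb C$ induced by $\varphi,\psi'$ factors through $R\otimes S^2\check W$, and $\psi'\psi=\lambda1_W$, $\psi\psi'=\mu1_{\check V}$ for some scalars. $\mathbf F_i$ ($1\le i\le3$) is the subset where $\mathrm{rk}\,\psi=i$, $\mathrm{rk}\,\psi'=4-i$; $\mathbf F_4$ is the open subset where $\psi$ is invertible. $PGL(R)$ acts by precomposition on $\varphi$, $PGL(W)$ by composition on $\varphi$, $\psi$ (via inverse) and $\psi'$. *)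

theory Defs
  imports "HOL-Analysis.Analysis"
begin

text \<open>Bases are fixed: R = C^3 (index type 3), V = C^4, its dual with the dual
basis (index type 4), W = C^4 (index type 4).
  phi : R (x) V -> W is given by the family of matrices phi$r : V -> W (rows indexed by W,
        columns by V), r ranging over the basis of R;
  psi : W -> V^ is a 4x4 matrix (rows indexed by the dual basis of V^, columns by W);
  psi' : V^ -> W is a 4x4 matrix (rows indexed by W, columns by the dual basis of V^).
A point of T x P(Hom(W,V^)) x P(Hom(V^,W)) is represented by a triple of nonzero
representatives (a point of the affine cone).\<close>

type_synonym phiT = "complex^4^4^3"
type_synonym matT = "complex^4^4"
type_synonym pt = "phiT \<times> matT \<times> matT"

definition inF :: "pt \<Rightarrow> bool" where
  "inF x = (case x of (phi, psi, psi') \<Rightarrow>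
     phi \<noteq> 0 \<and> psi \<noteq> 0 \<and> psi' \<noteq> 0 \<and>
     (\<forall>r. transpose (psi ** (phi$r)) = psi ** (phi$r)) \<and>
     (\<forall>r. transpose (psi' ** transpose (phi$r)) = psi' ** transpose (phi$r)) \<and>
     (\<exists>l. psi' ** psi = mat l) \<and>
     (\<exists>m. psi ** psi' = mat m))"

definition inFi :: "nat \<Rightarrow> pt \<Rightarrow> bool" where
  "inFi i x = (case x of (phi, psi, psi') \<Rightarrow>
     inF x \<and>
     (if i = 4 then invertible psi
      else rank psi = i \<and> rank psi' = 4 - i))"

inductive_set polys :: "('x \<Rightarrow> complex) set \<Rightarrow> ('x \<Rightarrow> complex) set" for C where
  const: "(\<lambda>_. c) \<in> polys C"
| coord: "f \<in> C \<Longrightarrow> f \<in> polys C"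
| add: "f \<in> polys C \<Longrightarrow> g \<in> polys C \<Longrightarrow> (\<lambda>x. f x + g x) \<in> polys C"
| mult: "f \<in> polys C \<Longrightarrow> g \<in> polys C \<Longrightarrow> (\<lambda>x. f x * g x) \<in> polys C"

definition pt_coords :: "(pt \<Rightarrow> complex) set" where
  "pt_coords =
     {(\<lambda>x. fst x $ r $ w $ v) | r w v. True} \<union>
     {(\<lambda>x. fst (snd x) $ i $ j) | i j. True} \<union>
     {(\<lambda>x. snd (snd x) $ i $ j) | i j. True}"

definition zariski_open :: "pt set \<Rightarrow> bool" where
  "zariski_open U = (\<exists>S \<subseteq> polys pt_coords. U = - {x. \<forall>p\<in>S. p x = 0})"

definition sc3 :: "complex \<Rightarrow> phiT \<Rightarrow> phiT" where
  "sc3 c phi = (\<chi> r i j. c * phi$r$i$j)"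
definition sc2 :: "complex \<Rightarrow> matT \<Rightarrow> matT" where
  "sc2 c A = (\<chi> i j. c * A$i$j)"

text \<open>Action of g in GL(R) by precomposition: (phi o (g (x) 1_V))_r = sum_s g_{s r} phi_s,
and of h in GL(W): phi |-> h phi, psi |-> psi h^{-1}, psi' |-> h psi'.\<close>
definition actR :: "complex^3^3 \<Rightarrow> phiT \<Rightarrow> phiT" where
  "actR g phi = (\<chi> r i j. \<Sum>s\<in>UNIV. g$s$r * phi$s$i$j)"
definition actW :: "matT \<Rightarrow> pt \<Rightarrow> pt" where
  "actW h x = (case x of (phi, psi, psi') \<Rightarrow>
      ((\<chi> r. h ** (phi$r)), psi ** matrix_inv h, h ** psi'))"

text \<open>The element ([h],[g]) of PGL(W) x PGL(R) fixes the point of the multiprojective space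
represented by x.\<close>
definition fixes_pt :: "matT \<Rightarrow> complex^3^3 \<Rightarrow> pt \<Rightarrow> bool" where
  "fixes_pt h g x = (case x of (phi, psi, psi') \<Rightarrow>
     (case actW h (actR g phi, psi, psi') of (phi1, psi1, psi1') \<Rightarrow>
       (\<exists>c. c \<noteq> 0 \<and> phi1 = sc3 c phi) \<and>
       (\<exists>d. d \<noteq> 0 \<and> psi1 = sc2 d psi) \<and>
       (\<exists>e. e \<noteq> 0 \<and> psi1' = sc2 e psi')))"

definition free_at :: "pt \<Rightarrow> bool" where
  "free_at x = (\<forall>(h::matT) (g::complex^3^3). invertible h \<and> invertible g \<and> fixes_pt h g x
                  \<longrightarrow> (\<exists>a. h = mat a) \<and> (\<exists>b. g = mat b))"

end

theory Submission
  imports Defs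
begin

(* If ([h],[g]) fixes the point (phi, psi, psi'), then phi is sent to c h^-1 phi and
   psi h^-1 = d psi, so g acts on the family of matrices psi phi_r (r = 1, 2, 3) as the scalar c d;
   likewise g acts by a scalar on the family psi' phi_r^T, using that these matrices are symmetric.
   Whenever three entries are linearly independent coordinates on such a family, g must be
   scalar, and then h phi_1 = (scalar) phi_1 makes h scalar as soon as phi_1 is invertible. Both
   conditions are Zariski open. The psi-family works on F_2, F_3, F_4; on F_1, where psi has rank
   one and all psi phi_r are proportional, the psi'-family is used instead. Explicit points built
   from the net <I, E_aa, E_ab + E_ba> and complementary coordinate projections show that the
   open sets meet each F_i. *)

lemma sc2_eq_mat_mult: "sc2 c A = mat c ** A"
  by (simp add: sc2_def vec_eq_iff matrix_matrix_mult_def mat_def if_distrib if_distribR cong: if_cong)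

lemma matrix_mult_mat_right: "(A ** mat c) $ i $ j = A $ i $ j * c"
  by (simp add: matrix_matrix_mult_def mat_def if_distrib if_distribR cong: if_cong)

lemma sc2_mult_left: "sc2 c A ** B = sc2 c (A ** B)"
  by (simp add: sc2_eq_mat_mult matrix_mul_assoc)

lemma sc2_mult_right: "A ** sc2 c B = sc2 c (A ** B)"
  by (simp add: sc2_def vec_eq_iff matrix_matrix_mult_def sum_distrib_left mult_ac)

lemma transpose_sc2: "transpose (sc2 c A) = sc2 c (transpose A)"
  by (simp add: sc2_def vec_eq_iff transpose_def)

lemma sc2_sc2: "sc2 c (sc2 d A) = sc2 (c * d) A"
  by (simp add: sc2_def vec_eq_iff)

lemma sc2_1: "sc2 1 A = A"
  by (simp add: sc2_def vec_eq_iff)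

lemma sc2_cancel: "c \<noteq> 0 \<Longrightarrow> sc2 c A = sc2 d B \<Longrightarrow> A = sc2 (d / c) B"
  by (metis sc2_sc2 sc2_1 field_class.field_inverse divide_inverse mult.commute)

lemma sc3_nth: "sc3 c X $ r = sc2 c (X $ r)"
  by (simp add: sc3_def sc2_def)

lemma invertible_mult_left_cancel:
  fixes M A B :: "'a::field^'n^'n"
  shows "invertible M \<Longrightarrow> M ** A = M ** B \<Longrightarrow> A = B"
  by (metis invertible_left_inverse matrix_mul_assoc matrix_mul_lid)

lemma invertible_mult_right_cancel:
  fixes M A B :: "'a::field^'n^'n"
  shows "invertible M \<Longrightarrow> A ** M = B ** M \<Longrightarrow> A = B"
  by (metis invertible_right_inverse matrix_mul_assoc matrix_mul_rid)

lemma matrix_inv_left: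
  fixes A :: "'a::field^'n^'n"
  assumes "invertible A"
  shows "matrix_inv A ** A = mat 1"
  using someI_ex[of "\<lambda>A'. A ** A' = mat 1 \<and> A' ** A = mat 1"] assms
  unfolding invertible_def matrix_inv_def by blast

lemma matrix_inv_eigen:
  assumes "invertible h" "e \<noteq> 0" "h ** A = sc2 e A"
  shows "matrix_inv h ** A = sc2 (1 / e) A"
proof -
  have "sc2 e (matrix_inv h ** A) = sc2 1 A"
    by (metis assms(1,3) matrix_inv_left matrix_mul_assoc matrix_mul_lid sc2_1 sc2_mult_right)
  then show ?thesis
    using assms(2) sc2_cancel by blast
qed

lemma mat_invertible_nonzero:
  assumes "invertible (mat l :: 'a::field^'n^'n)"
  shows "l \<noteq> 0"
proof
  assume "l = 0"
  with assms obtain A' :: "'a^'n^'n" where "mat 0 ** A' = mat 1"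
    by (auto simp: invertible_def)
  then have "(mat 1 :: 'a^'n^'n) = 0"
    by (simp add: vec_eq_iff matrix_matrix_mult_def mat_def)
  then have "(mat 1 :: 'a^'n^'n) $ i $ i = 0" for i
    by simp
  then show False
    by (simp add: mat_def)
qed

definition lmult :: "matT \<Rightarrow> phiT \<Rightarrow> phiT" where
  "lmult A X = (\<chi> r. A ** X $ r)"

definition transposes :: "phiT \<Rightarrow> phiT" where
  "transposes X = (\<chi> r. transpose (X $ r))"

lemma actW_eq: "actW h (phi, psi, psi') = (lmult h phi, psi ** matrix_inv h, h ** psi')"
  by (simp add: actW_def lmult_def)

lemma lmult_actR: "lmult A (actR g X) = actR g (lmult A X)"
  by (simp add: vec_eq_iff lmult_def actR_def matrix_matrix_mult_def sum_distrib_left mult_ac)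
     (intro allI, rule sum.swap)

lemma transposes_actR: "transposes (actR g X) = actR g (transposes X)"
  by (simp add: vec_eq_iff transposes_def actR_def transpose_def)

lemma actR_mat: "actR (mat l) X = sc3 l X"
  by (simp add: vec_eq_iff actR_def sc3_def mat_def if_distrib if_distribR cong: if_cong)

definition sym_coord_matrix :: "4 \<Rightarrow> 4 \<Rightarrow> phiT \<Rightarrow> complex^3^3" where
  "sym_coord_matrix a b X =
     (\<chi> k s. if k = 1 then X $ s $ a $ a else if k = 2 then X $ s $ a $ b else X $ s $ b $ b)"

lemma sym_coord_matrix_actR: "sym_coord_matrix a b (actR g X) = sym_coord_matrix a b X ** g"
proof -
  have "sym_coord_matrix a b (actR g X) $ k $ r = (sym_coord_matrix a b X ** g) $ k $ r" for k r
    by (cases "k = 1"; cases "k = 2")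
       (simp_all add: sym_coord_matrix_def actR_def matrix_matrix_mult_def mult.commute)
  then show ?thesis
    by (simp add: vec_eq_iff)
qed

lemma sym_coord_matrix_sc3: "sym_coord_matrix a b (sc3 l X) = sym_coord_matrix a b X ** mat l"
  by (simp add: sym_coord_matrix_def sc3_def matrix_mult_mat_right vec_eq_iff)

lemma actR_eigen_imp_scalar:
  assumes "actR g X = sc3 l X" and "det (sym_coord_matrix a b X) \<noteq> 0"
  shows "g = mat l"
proof (rule invertible_mult_left_cancel)
  show "invertible (sym_coord_matrix a b X)"
    using assms(2) invertible_det_nz by blast
  show "sym_coord_matrix a b X ** g = sym_coord_matrix a b X ** mat l"
    using sym_coord_matrix_actR[of a b g X] sym_coord_matrix_sc3[of a b l X] assms(1) by simp
qed

lemma fixes_ptE: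
  assumes "fixes_pt h g (phi, psi, psi')"
  obtains c d e where "c \<noteq> 0" "d \<noteq> 0" "e \<noteq> 0"
    "lmult h (actR g phi) = sc3 c phi"
    "psi ** matrix_inv h = sc2 d psi"
    "h ** psi' = sc2 e psi'"
  using assms by (auto simp: fixes_pt_def actW_eq)

lemma free_at_if_stabilizer_scalar_on_R:
  assumes phi1: "det (phi $ 1) \<noteq> 0"
    and scalar: "\<And>h g. invertible h \<Longrightarrow> fixes_pt h g (phi, psi, psi') \<Longrightarrow> \<exists>l. g = mat l"
  shows "free_at (phi, psi, psi')"
  unfolding free_at_def
proof (intro allI impI)
  fix h :: matT and g :: "complex^3^3"
  assume "invertible h \<and> invertible g \<and> fixes_pt h g (phi, psi, psi')"
  then have h: "invertible h" and g: "invertible g" and fixing: "fixes_pt h g (phi, psi, psi')"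
    by auto
  obtain l where l: "g = mat l"
    using scalar[OF h fixing] by blast
  have "l \<noteq> 0"
    using g l mat_invertible_nonzero by blast
  obtain c where "lmult h (actR g phi) = sc3 c phi"
    using fixes_ptE[OF fixing] by blast
  then have "lmult h (sc3 l phi) $ 1 = sc3 c phi $ 1"
    by (simp add: l actR_mat)
  then have "sc2 l (h ** phi $ 1) = sc2 c (phi $ 1)"
    by (simp add: lmult_def sc3_nth sc2_mult_right)
  then have "h ** phi $ 1 = mat (c / l) ** phi $ 1"
    using sc2_cancel[OF \<open>l \<noteq> 0\<close>] by (simp add: sc2_eq_mat_mult)
  moreover have "invertible (phi $ 1)"
    using phi1 invertible_det_nz by blast
  ultimately have "h = mat (c / l)"
    using invertible_mult_right_cancel by blast
  with l show "(\<exists>a. h = mat a) \<and> (\<exists>b. g = mat b)"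
    by blast
qed

lemma fixes_ptE_inverse:
  assumes "invertible h" and "fixes_pt h g (phi, psi, psi')"
  obtains c d e where "c \<noteq> 0" "d \<noteq> 0" "e \<noteq> 0"
    "\<And>r. actR g phi $ r = sc2 c (matrix_inv h ** phi $ r)"
    "psi ** matrix_inv h = sc2 d psi"
    "matrix_inv h ** psi' = sc2 e psi'"
proof -
  obtain c d e where nz: "c \<noteq> 0" "d \<noteq> 0" "e \<noteq> 0"
    and phi: "lmult h (actR g phi) = sc3 c phi"
    and psi: "psi ** matrix_inv h = sc2 d psi"
    and psi': "h ** psi' = sc2 e psi'"
    using fixes_ptE[OF assms(2)] by blast
  have "actR g phi $ r = sc2 c (matrix_inv h ** phi $ r)" for r
  proof -
    have "h ** actR g phi $ r = sc2 c (phi $ r)"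
      using arg_cong[OF phi, of "\<lambda>X. X $ r"] by (simp add: lmult_def sc3_nth)
    then have "matrix_inv h ** (h ** actR g phi $ r) = sc2 c (matrix_inv h ** phi $ r)"
      by (simp add: sc2_mult_right)
    then show ?thesis
      by (simp add: matrix_mul_assoc matrix_inv_left[OF assms(1)])
  qed
  moreover have "matrix_inv h ** psi' = sc2 (1 / e) psi'"
    using matrix_inv_eigen[OF assms(1) nz(3) psi'] .
  ultimately show ?thesis
    using that[of c d "1 / e"] nz psi by simp
qed

lemma fixes_pt_psi_family_eigen:
  assumes "invertible h" and "fixes_pt h g (phi, psi, psi')"
  shows "\<exists>l. actR g (lmult psi phi) = sc3 l (lmult psi phi)"
proof -
  obtain c d where phi: "\<And>r. actR g phi $ r = sc2 c (matrix_inv h ** phi $ r)"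
    and psi: "psi ** matrix_inv h = sc2 d psi"
    using fixes_ptE_inverse[OF assms] by metis
  have "psi ** actR g phi $ r = sc2 (c * d) (psi ** phi $ r)" for r
  proof -
    have "psi ** actR g phi $ r = sc2 c ((psi ** matrix_inv h) ** phi $ r)"
      by (simp add: phi sc2_mult_right matrix_mul_assoc)
    also have "\<dots> = sc2 (c * d) (psi ** phi $ r)"
      by (simp add: psi sc2_mult_left sc2_sc2)
    finally show ?thesis .
  qed
  then have "lmult psi (actR g phi) = sc3 (c * d) (lmult psi phi)"
    by (subst vec_eq_iff) (simp add: lmult_def sc3_nth)
  then have "actR g (lmult psi phi) = sc3 (c * d) (lmult psi phi)"
    by (simp add: lmult_actR)
  then show ?thesis ..
qed

lemma fixes_pt_psi'_family_eigen:
  assumes "invertible h" and "fixes_pt h g (phi, psi, psi')"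
    and sym: "\<And>r. transpose (psi' ** transpose (phi $ r)) = psi' ** transpose (phi $ r)"
  shows "\<exists>l. actR g (lmult psi' (transposes phi)) = sc3 l (lmult psi' (transposes phi))"
proof -
  obtain c e where phi: "\<And>r. actR g phi $ r = sc2 c (matrix_inv h ** phi $ r)"
    and psi': "matrix_inv h ** psi' = sc2 e psi'"
    using fixes_ptE_inverse[OF assms(1,2)] by metis
  have "psi' ** transpose (actR g phi $ r) = sc2 (c * e) (psi' ** transpose (phi $ r))" for r
  proof -
    let ?S = "psi' ** transpose (phi $ r)"
    have "psi' ** transpose (actR g phi $ r) = sc2 c (?S ** transpose (matrix_inv h))"
      by (simp add: phi transpose_sc2 sc2_mult_right matrix_transpose_mul matrix_mul_assoc)
    also have "?S ** transpose (matrix_inv h) = transpose (matrix_inv h ** ?S)"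
      by (metis matrix_transpose_mul sym)
    also have "\<dots> = sc2 e ?S"
      by (simp add: matrix_mul_assoc psi' sc2_mult_left transpose_sc2 sym)
    finally show ?thesis
      by (simp add: sc2_sc2)
  qed
  then have "lmult psi' (transposes (actR g phi)) = sc3 (c * e) (lmult psi' (transposes phi))"
    by (subst vec_eq_iff) (simp add: lmult_def transposes_def sc3_nth)
  then have "actR g (lmult psi' (transposes phi)) = sc3 (c * e) (lmult psi' (transposes phi))"
    by (simp add: transposes_actR lmult_actR)
  then show ?thesis ..
qed

definition U_psi :: "pt set" where
  "U_psi = {x. det (fst x $ 1) * det (sym_coord_matrix 1 2 (lmult (fst (snd x)) (fst x))) \<noteq> 0}"

definition U_psi' :: "pt set" where
  "U_psi' =
     {x. det (fst x $ 1) * det (sym_coord_matrix 2 3 (lmult (snd (snd x)) (transposes (fst x)))) \<noteq> 0}"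

lemma free_at_U_psi:
  assumes "x \<in> U_psi"
  shows "free_at x"
proof -
  obtain phi psi psi' where x: "x = (phi, psi, psi')"
    by (cases x)
  show ?thesis
    unfolding x
  proof (rule free_at_if_stabilizer_scalar_on_R)
    show "det (phi $ 1) \<noteq> 0"
      using assms by (simp add: x U_psi_def)
    show "\<exists>l. g = mat l" if "invertible h" "fixes_pt h g (phi, psi, psi')" for h g
      using fixes_pt_psi_family_eigen[OF that] actR_eigen_imp_scalar assms
      by (fastforce simp: x U_psi_def)
  qed
qed

lemma free_at_U_psi':
  assumes "x \<in> U_psi'" and "inF x"
  shows "free_at x"
proof -
  obtain phi psi psi' where x: "x = (phi, psi, psi')"
    by (cases x)
  have sym: "\<And>r. transpose (psi' ** transpose (phi $ r)) = psi' ** transpose (phi $ r)"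
    using assms(2) by (simp add: x inF_def)
  show ?thesis
    unfolding x
  proof (rule free_at_if_stabilizer_scalar_on_R)
    show "det (phi $ 1) \<noteq> 0"
      using assms(1) by (simp add: x U_psi'_def)
    show "\<exists>l. g = mat l" if "invertible h" "fixes_pt h g (phi, psi, psi')" for h g
      using fixes_pt_psi'_family_eigen[OF that sym] actR_eigen_imp_scalar assms(1)
      by (fastforce simp: x U_psi'_def)
  qed
qed

lemma polys_sum:
  "finite A \<Longrightarrow> (\<And>j. j \<in> A \<Longrightarrow> f j \<in> polys C) \<Longrightarrow> (\<lambda>x. \<Sum>j\<in>A. f j x) \<in> polys C"
proof (induction A rule: finite_induct)
  case empty
  show ?case
    using polys.const[of 0 C] by simp
next
  case (insert a A)
  then show ?case
    using polys.add[of "f a" C] by simp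
qed

lemma polys_prod:
  "finite A \<Longrightarrow> (\<And>j. j \<in> A \<Longrightarrow> f j \<in> polys C) \<Longrightarrow> (\<lambda>x. \<Prod>j\<in>A. f j x) \<in> polys C"
proof (induction A rule: finite_induct)
  case empty
  show ?case
    using polys.const[of 1 C] by simp
next
  case (insert a A)
  then show ?case
    using polys.mult[of "f a" C] by simp
qed

lemma polys_det:
  assumes "\<And>i j. (\<lambda>x. A x $ i $ j) \<in> polys C"
  shows "(\<lambda>x. det (A x)) \<in> polys C"
  unfolding det_def
  by (intro polys_sum[where f = "\<lambda>p x. of_int (sign p) * (\<Prod>i\<in>UNIV. A x $ i $ p i)", simplified]
      polys.mult polys.const polys_prod[where f = "\<lambda>i x. A x $ i $ _ i", simplified] assms)

lemma polys_matrix_mult: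
  assumes "\<And>i j. (\<lambda>x. A x $ i $ j) \<in> polys C" and "\<And>i j. (\<lambda>x. B x $ i $ j) \<in> polys C"
  shows "(\<lambda>x. (A x ** B x) $ i $ j) \<in> polys C"
  unfolding matrix_matrix_mult_def
  by (simp, intro polys_sum polys.mult assms) simp

lemma polys_lmult:
  assumes "\<And>i j. (\<lambda>x. A x $ i $ j) \<in> polys C" and "\<And>r i j. (\<lambda>x. X x $ r $ i $ j) \<in> polys C"
  shows "(\<lambda>x. lmult (A x) (X x) $ r $ i $ j) \<in> polys C"
  unfolding lmult_def by (simp add: polys_matrix_mult assms)

lemma polys_transposes:
  assumes "\<And>r i j. (\<lambda>x. X x $ r $ i $ j) \<in> polys C"
  shows "(\<lambda>x. transposes (X x) $ r $ i $ j) \<in> polys C"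
  unfolding transposes_def transpose_def by (simp add: assms)

lemma polys_sym_coord_matrix:
  assumes "\<And>s i j. (\<lambda>x. X x $ s $ i $ j) \<in> polys C"
  shows "(\<lambda>x. sym_coord_matrix a b (X x) $ k $ s) \<in> polys C"
  by (cases "k = 1"; cases "k = 2") (simp_all add: sym_coord_matrix_def assms)

lemma polys_phi_coord: "(\<lambda>x. fst x $ r $ i $ j) \<in> polys pt_coords"
  by (rule polys.coord) (unfold pt_coords_def, blast)

lemma polys_psi_coord: "(\<lambda>x. fst (snd x) $ i $ j) \<in> polys pt_coords"
  by (rule polys.coord) (unfold pt_coords_def, blast)

lemma polys_psi'_coord: "(\<lambda>x. snd (snd x) $ i $ j) \<in> polys pt_coords"
  by (rule polys.coord) (unfold pt_coords_def, blast)

lemma zariski_open_nonzero: "p \<in> polys pt_coords \<Longrightarrow> zariski_open {x. p x \<noteq> 0}"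
  unfolding zariski_open_def by (rule exI[of _ "{p}"]) auto

lemma zariski_open_U_psi: "zariski_open U_psi"
  unfolding U_psi_def
  by (intro zariski_open_nonzero polys.mult polys_det polys_sym_coord_matrix polys_lmult
      polys_phi_coord polys_psi_coord)

lemma zariski_open_U_psi': "zariski_open U_psi'"
  unfolding U_psi'_def
  by (intro zariski_open_nonzero polys.mult polys_det polys_sym_coord_matrix polys_lmult
      polys_transposes polys_phi_coord polys_psi'_coord)

definition diagM :: "4 set \<Rightarrow> matT" where
  "diagM A = (\<chi> x y. if x = y \<and> x \<in> A then 1 else 0)"

definition elementary_phi :: "4 \<Rightarrow> 4 \<Rightarrow> phiT" where
  "elementary_phi a b = (\<chi> r x y.
     if r = 1 then (if x = y then 1 else 0)
     else if r = 2 then (if x = a \<and> y = a then 1 else 0)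
     else (if (x = a \<and> y = b) \<or> (x = b \<and> y = a) then 1 else 0))"

lemma diagM_mult: "diagM A ** X = (\<chi> x y. if x \<in> A then X $ x $ y else 0)"
  by (simp add: vec_eq_iff diagM_def matrix_matrix_mult_def if_distrib if_distribR cong: if_cong)

lemma diagM_mult_diagM: "diagM A ** diagM B = diagM (A \<inter> B)"
  by (simp add: diagM_mult vec_eq_iff) (simp add: diagM_def)

lemma diagM_UNIV: "diagM UNIV = mat 1"
  by (simp add: diagM_def mat_def)

lemma diagM_empty: "diagM {} = mat 0"
  by (simp add: diagM_def mat_def)

lemma diagM_nonzero:
  assumes "A \<noteq> {}"
  shows "diagM A \<noteq> 0"
proof
  assume zero: "diagM A = 0"
  obtain a where "a \<in> A"
    using assms by blast
  moreover have "diagM A $ a $ a = 0"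
    using zero by simp
  ultimately show False
    by (simp add: diagM_def)
qed

lemma rank_diagM: "rank (diagM A) = card A"
proof -
  let ?B = "(\<lambda>i. axis i (1::complex)) ` A"
  have "row i (diagM A) = (if i \<in> A then axis i 1 else 0)" for i
    by (auto simp: row_def diagM_def vec_eq_iff axis_def)
  then have rows: "rows (diagM A) \<subseteq> insert 0 ?B" and "?B \<subseteq> rows (diagM A)"
    by (auto simp: rows_def)
  moreover have "vec.independent ?B"
    by (rule vec.independent_mono[OF independent_cart_basis]) (auto simp: cart_basis_def)
  moreover have "rows (diagM A) \<subseteq> vec.span ?B"
    using rows vec.span_zero vec.span_base by blast
  ultimately have "card ?B = vec.dim (rows (diagM A))"
    using vec.basis_card_eq_dim by blast
  moreover have "card ?B = card A"
    by (rule card_image) (auto simp: inj_on_def axis_eq_axis)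
  ultimately show ?thesis
    by (simp add: row_rank_def_gen)
qed

lemma elementary_phi_1: "elementary_phi a b $ 1 = mat 1"
  by (simp add: elementary_phi_def mat_def vec_eq_iff)

lemma transpose_elementary_phi: "transpose (elementary_phi a b $ r) = elementary_phi a b $ r"
  by (auto simp: elementary_phi_def transpose_def vec_eq_iff)

lemma transposes_elementary_phi: "transposes (elementary_phi a b) = elementary_phi a b"
  by (simp add: transposes_def transpose_elementary_phi)

lemma elementary_phi_nonzero: "elementary_phi a b \<noteq> 0"
proof
  assume "elementary_phi a b = 0"
  then have "elementary_phi a b $ 1 $ 1 $ 1 = 0"
    by simp
  then show False
    by (simp add: elementary_phi_def)
qed

lemma diagM_mult_elementary_phi_symmetric:
  assumes "a \<in> A \<longleftrightarrow> b \<in> A"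
  shows "transpose (diagM A ** elementary_phi a b $ r) = diagM A ** elementary_phi a b $ r"
  using assms by (auto simp: diagM_mult elementary_phi_def transpose_def vec_eq_iff)

lemma inF_elementary_phi_diagM:
  assumes "a \<in> A \<longleftrightarrow> b \<in> A" and "A \<noteq> {}" and "A \<noteq> UNIV"
  shows "inF (elementary_phi a b, diagM A, diagM (- A))"
proof -
  have "a \<in> - A \<longleftrightarrow> b \<in> - A" and "- A \<noteq> {}"
    using assms by auto
  moreover have "diagM (- A) ** diagM A = mat 0" and "diagM A ** diagM (- A) = mat 0"
    by (simp_all add: diagM_mult_diagM diagM_empty Int_commute)
  ultimately show ?thesis
    unfolding inF_def prod.case transpose_elementary_phi
    by (intro conjI allI exI diagM_mult_elementary_phi_symmetric elementary_phi_nonzero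
        diagM_nonzero assms(1,2))
qed

lemma inF_elementary_phi_identity: "inF (elementary_phi a b, mat 1, mat 1)"
proof -
  have "(mat 1 :: matT) \<noteq> 0"
    using diagM_nonzero[of UNIV] by (simp add: diagM_UNIV)
  then show ?thesis
    using elementary_phi_nonzero
    by (auto simp: inF_def transpose_elementary_phi intro!: exI[of _ 1])
qed

lemma sym_coord_matrix_lmult_diagM:
  assumes "a \<in> A" and "b \<in> A"
  shows "sym_coord_matrix a b (lmult (diagM A) X) = sym_coord_matrix a b X"
  using assms by (simp add: sym_coord_matrix_def lmult_def diagM_mult vec_eq_iff)

lemma det_sym_coord_matrix_elementary_phi:
  assumes "a \<noteq> b"
  shows "det (sym_coord_matrix a b (elementary_phi a b)) \<noteq> 0"
  using assms by (simp add: det_3 sym_coord_matrix_def elementary_phi_def)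

lemma elementary_phi_in_U_psi:
  assumes "1 \<in> A" and "2 \<in> A"
  shows "(elementary_phi 1 2, diagM A, psi') \<in> U_psi"
  using assms det_sym_coord_matrix_elementary_phi[of 1 2]
  by (simp add: U_psi_def elementary_phi_1 sym_coord_matrix_lmult_diagM)

lemma elementary_phi_in_U_psi':
  assumes "2 \<in> B" and "3 \<in> B"
  shows "(elementary_phi 2 3, psi, diagM B) \<in> U_psi'"
  using assms det_sym_coord_matrix_elementary_phi[of 2 3]
  by (simp add: U_psi'_def elementary_phi_1 sym_coord_matrix_lmult_diagM transposes_elementary_phi)

lemma inFi_elementary_phi_diagM:
  assumes "a \<in> A \<longleftrightarrow> b \<in> A" and "A \<noteq> {}" and "A \<noteq> UNIV"
  shows "inFi (card A) (elementary_phi a b, diagM A, diagM (- A))"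
proof -
  have "card A < 4"
    using assms(3) psubset_card_mono[of UNIV A] by auto
  moreover have "card (- A) = 4 - card A"
    by (simp add: Compl_eq_Diff_UNIV card_Diff_subset)
  ultimately show ?thesis
    using inF_elementary_phi_diagM[OF assms] by (simp add: inFi_def rank_diagM)
qed

lemma inFi_imp_inF: "inFi i x \<Longrightarrow> inF x"
  by (cases x) (simp add: inFi_def)

lemma U_psi_witness:
  fixes A :: "4 set"
  assumes "1 \<in> A" and "2 \<in> A" and "c \<notin> A"
  shows "\<exists>x. inFi (card A) x \<and> x \<in> U_psi"
proof -
  have "A \<noteq> UNIV"
    using assms(3) by blast
  then show ?thesis
    using assms(1,2) inFi_elementary_phi_diagM[of 1 A 2] elementary_phi_in_U_psi[of A] by blast
qed

lemma U_psi'_witness: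
  fixes A :: "4 set"
  assumes "c \<in> A" and "2 \<notin> A" and "3 \<notin> A"
  shows "\<exists>x. inFi (card A) x \<and> x \<in> U_psi'"
proof -
  have "A \<noteq> {}" and "A \<noteq> UNIV"
    using assms(1,2) by blast+
  then show ?thesis
    using assms(2,3) inFi_elementary_phi_diagM[of 2 A 3] elementary_phi_in_U_psi'[of "- A"] by blast
qed

lemma inFi_witness:
  assumes "1 \<le> i" and "i \<le> 4"
  shows "\<exists>x. inFi i x \<and> x \<in> (if i = 1 then U_psi' else U_psi)"
proof -
  consider "i = 1" | "i = 2" | "i = 3" | "i = 4"
    using assms by linarith
  then show ?thesis
  proof cases
    case 1
    then show ?thesis
      using U_psi'_witness[of 1 "{1}"] by simp
  next
    case 2
    then show ?thesis
      using U_psi_witness[of "{1, 2}" 3] by (simp add: eval_nat_numeral)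
  next
    case 3
    then show ?thesis
      using U_psi_witness[of "{1, 2, 3}" 4] by (simp add: eval_nat_numeral)
  next
    case 4
    have "invertible (mat 1 :: matT)"
      by (auto simp: invertible_def)
    then have "inFi 4 (elementary_phi 1 2, mat 1, mat 1)"
      using inF_elementary_phi_identity by (simp add: inFi_def)
    moreover have "(elementary_phi 1 2, mat 1, mat 1) \<in> U_psi"
      using elementary_phi_in_U_psi[of UNIV] by (simp add: diagM_UNIV)
    ultimately show ?thesis
      using 4 by auto
  qed
qed

theorem mainTheorem8:
  fixes i :: nat
  assumes "1 \<le> i" and "i \<le> 4"
  shows "\<exists>U. zariski_open U \<and> {x. inFi i x} \<inter> U \<noteq> {} \<and>
             (\<forall>x \<in> {x. inFi i x} \<inter> U. free_at x)"
proof -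
  let ?U = "if i = 1 then U_psi' else U_psi"
  have "zariski_open ?U"
    using zariski_open_U_psi zariski_open_U_psi' by simp
  moreover have "{x. inFi i x} \<inter> ?U \<noteq> {}"
    using inFi_witness[OF assms] by blast
  moreover have "free_at x" if "inFi i x" and "x \<in> ?U" for x
    using that free_at_U_psi free_at_U_psi' inFi_imp_inF by (cases "i = 1") simp_all
  ultimately show ?thesis
    by blast
qed

end
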